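(* For every vertex $\mathbf{x}$ of $P^n_{\mathrm{SEP}}$, the optimal values of the linear programs $\mathcal{D}\mathrm{OPT}^{\mathrm{I}}(\mathbf{x})$ and $\mathcal{D}\mathrm{OPT}^{\mathrm{II}}(\mathbf{x})$ coincide.
   Context: $K_n=(V_n,E_n)$ is the complete undirected graph on $n$ nodes; $\delta(S)$ is the set of edges with exactly one endpoint in $S$. $P^n_{\mathrm{SEP}}=\{\mathbf{x}\in\mathbb{R}^{E_n} : \sum_{e\in\delta(v)}x_e=2\ \forall v;\ \sum_{e\in\delta(S)}x_e\ge 2\ \forall S \text{ with } 3\le|S|\le n-3;\ 0\le x_e\le 1\}$; a vertex is an extreme point. The support graph of $\mathbf{x}$ is $G_{\mathbf{x}}=(V_n,E_{\mathbf{x}})$ with $E_{\mathbf{x}}=\{e:x_e>0\}$. A walk on a graph $G$ is a closed walk visiting every node at least once, identified with its characteristic vector $\mathbf{w}$ ($w_{ij}$ = number of traversals of edge $ij$); only walks with $w_{ij}\in\{0,1,2\}$ for all edges are considered. Edges are unordered, so $\lambda_{ijk}$ and $\lambda_{jik}$ denote the same variable (but $\lambda_{ijk}\ne\lambda_{kji}$). $\mathcal{D}\mathrm{OPT}^{\mathrm{I}}(\mathbf{x})$: maximize $\sum_{\mathbf{w}\text{ walk on }K_n}\mu_{\mathbf{w}}$ subject to $\sum_{k\ne i,j}(-\lambda_{ijk}+\lambda_{ikj}+\lambda_{jki})+\sum_{\mathbf{w}}w_{ij}\mu_{\mathbf{w}}\le x_{ij}$ for all $ij\in E_n$, $\lambda_{ijk}\ge0$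 for all $ij\in E_n$, $k\in V_n\setminus\{i,j\}$, $\mu_{\mathbf{w}}\ge0$. $\mathcal{D}\mathrm{OPT}^{\mathrm{II}}(\mathbf{x})$: maximize $\sum_{\mathbf{w}\text{ walk on }G_{\mathbf{x}}}\mu_{\mathbf{w}}$ subject to $\sum_{\mathbf{w}\text{ walk on }G_{\mathbf{x}}}w_{ij}\mu_{\mathbf{w}}\le x_{ij}$ for all $ij\in E_{\mathbf{x}}$, $\mu_{\mathbf{w}}\ge0$. *)

theory Defs
  imports "HOL-Analysis.Analysis"
begin

text \<open>Nodes of K_n are 0,...,n-1; an (undirected) edge is a two-element set {i,j}.
  Vectors in R^{E_n} are functions on edges, required to vanish off E_n.\<close>

definition Vn :: "nat \<Rightarrow> nat set" where
  "Vn n = {..<n}"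

definition En :: "nat \<Rightarrow> nat set set" where
  "En n = {{i, j} | i j. i < n \<and> j < n \<and> i \<noteq> j}"

definition delta :: "nat \<Rightarrow> nat set \<Rightarrow> nat set set" where
  "delta n S = {e \<in> En n. card (e \<inter> S) = 1}"

definition P_SEP :: "nat \<Rightarrow> (nat set \<Rightarrow> real) set" where
  "P_SEP n = {x. (\<forall>e. e \<notin> En n \<longrightarrow> x e = 0)
      \<and> (\<forall>v \<in> Vn n. (\<Sum>e \<in> delta n {v}. x e) = 2)
      \<and> (\<forall>S. S \<subseteq> Vn n \<and> 3 \<le> card S \<and> card S + 3 \<le> n \<longrightarrow> (\<Sum>e \<in> delta n S. x e) \<ge> 2)
      \<and> (\<forall>e \<in> En n. 0 \<le> x e \<and> x e \<le> 1)}"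

definition is_vertex :: "(nat set \<Rightarrow> real) \<Rightarrow> (nat set \<Rightarrow> real) set \<Rightarrow> bool" where
  "is_vertex x P \<longleftrightarrow> x \<in> P \<and>
     \<not> (\<exists>y \<in> P. \<exists>z \<in> P. \<exists>u::real. y \<noteq> z \<and> 0 < u \<and> u < 1 \<and> x = (\<lambda>e. u * y e + (1 - u) * z e))"

definition support_edges :: "nat \<Rightarrow> (nat set \<Rightarrow> real) \<Rightarrow> nat set set" where
  "support_edges n x = {e \<in> En n. x e > 0}"

definition closed_covering_walk :: "nat set \<Rightarrow> nat set set \<Rightarrow> nat list \<Rightarrow> bool" where
  "closed_covering_walk V E vs \<longleftrightarrow> vs \<noteq> [] \<and> hd vs = last vs \<and> set vs = V \<and>
     (\<forall>i. Suc i < length vs \<longrightarrow> {vs ! i, vs ! Suc i} \<in> E \<and> vs ! i \<noteq> vs ! Suc i)"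

definition walk_vector :: "nat list \<Rightarrow> nat set \<Rightarrow> nat" where
  "walk_vector vs e = card {i. Suc i < length vs \<and> {vs ! i, vs ! Suc i} = e}"

definition walks :: "nat set \<Rightarrow> nat set set \<Rightarrow> (nat set \<Rightarrow> nat) set" where
  "walks V E = {w. (\<exists>vs. closed_covering_walk V E vs \<and> w = walk_vector vs) \<and> (\<forall>e. w e \<le> 2)}"

definition DOPT_I_feasible :: "nat \<Rightarrow> (nat set \<Rightarrow> real) \<Rightarrow>
    ((nat set \<Rightarrow> nat \<Rightarrow> real) \<times> ((nat set \<Rightarrow> nat) \<Rightarrow> real)) set" where
  "DOPT_I_feasible n x = {(lam, mu).
     (\<forall>i j. i < n \<and> j < n \<and> i \<noteq> j \<longrightarrow>
        (\<Sum>k \<in> Vn n - {i, j}. - lam {i, j} k + lam {i, k} j + lam {j, k} i)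
        + (\<Sum>w \<in> walks (Vn n) (En n). real (w {i, j}) * mu w) \<le> x {i, j})
     \<and> (\<forall>e \<in> En n. \<forall>k \<in> Vn n - e. lam e k \<ge> 0)
     \<and> (\<forall>w \<in> walks (Vn n) (En n). mu w \<ge> 0)}"

definition DOPT_I :: "nat \<Rightarrow> (nat set \<Rightarrow> real) \<Rightarrow> ereal" where
  "DOPT_I n x = Sup ((\<lambda>(lam, mu). ereal (\<Sum>w \<in> walks (Vn n) (En n). mu w)) ` DOPT_I_feasible n x)"

definition DOPT_II_feasible :: "nat \<Rightarrow> (nat set \<Rightarrow> real) \<Rightarrow> ((nat set \<Rightarrow> nat) \<Rightarrow> real) set" where
  "DOPT_II_feasible n x = {mu.
     (\<forall>e \<in> support_edges n x.
        (\<Sum>w \<in> walks (Vn n) (support_edges n x). real (w e) * mu w) \<le> x e)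
     \<and> (\<forall>w \<in> walks (Vn n) (support_edges n x). mu w \<ge> 0)}"

definition DOPT_II :: "nat \<Rightarrow> (nat set \<Rightarrow> real) \<Rightarrow> ereal" where
  "DOPT_II n x = Sup ((\<lambda>mu. ereal (\<Sum>w \<in> walks (Vn n) (support_edges n x). mu w)) ` DOPT_II_feasible n x)"

end

theory Submission
  imports Defs
begin

text \<open>
  \<open>DOPT\<^sup>II(x) \<le> DOPT\<^sup>I(x)\<close>: walks on \<open>G\<^sub>x\<close> are walks on \<open>K\<^sub>n\<close>, so take \<open>\<lambda> = 0\<close>.

  Conversely, if a feasible \<open>(\<lambda>, \<mu>)\<close> of \<open>DOPT\<^sup>I(x)\<close> had value \<open>s > DOPT\<^sup>II(x)\<close>, Farkas' lemma
  (via Fourier--Motzkin elimination) would give \<open>y \<ge> 0\<close> on \<open>E\<^sub>x\<close> such that every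
  walk on \<open>G\<^sub>x\<close> has \<open>y\<close>-length at least \<open>1\<close> while \<open>y\<cdot>x < s\<close>. Let \<open>D\<close> be the shortest-path
  distance of \<open>G\<^sub>x\<close> with edge lengths \<open>y\<close>, truncated at \<open>1\<close>. It satisfies the triangle
  inequality on all of \<open>K\<^sub>n\<close>, \<open>D \<le> y\<close> on \<open>E\<^sub>x\<close>, and every walk on \<open>K\<^sub>n\<close> has \<open>D\<close>-length
  at least \<open>1\<close>: replacing its edges by shortest paths of \<open>G\<^sub>x\<close> and shortcutting edges used
  more than twice yields a walk on \<open>G\<^sub>x\<close>. Weighting the constraints of \<open>DOPT\<^sup>I\<close> by \<open>D\<close>, the
  \<open>\<lambda>\<close>-terms contribute \<open>\<Sum> \<lambda>\<^sub>i\<^sub>j\<^sub>k (D\<^sub>i\<^sub>k + D\<^sub>j\<^sub>k - D\<^sub>i\<^sub>j) \<ge> 0\<close>, hence \<open>s \<le> D\<cdot>x \<le> y\<cdot>x < s\<close>.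
\<close>

section \<open>Farkas' lemma\<close>

definition lin_feasible :: "'j set \<Rightarrow> (('j \<Rightarrow> real) \<times> real) set \<Rightarrow> ('j \<Rightarrow> real) \<Rightarrow> bool" where
  "lin_feasible J R z \<longleftrightarrow> (\<forall>r\<in>R. (\<Sum>i\<in>J. fst r i * z i) \<le> snd r)"

definition farkas_certificate ::
    "'j set \<Rightarrow> (('j \<Rightarrow> real) \<times> real) set \<Rightarrow> ((('j \<Rightarrow> real) \<times> real) \<Rightarrow> real) \<Rightarrow> bool" where
  "farkas_certificate J R u \<longleftrightarrow> (\<forall>r\<in>R. 0 \<le> u r) \<and> (\<forall>i\<in>J. (\<Sum>r\<in>R. u r * fst r i) = 0)
     \<and> (\<Sum>r\<in>R. u r * snd r) < 0"

definition nonneg_combination :: "(('j \<Rightarrow> real) \<times> real) set \<Rightarrow> (('j \<Rightarrow> real) \<times> real) \<Rightarrow> bool" where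
  "nonneg_combination R r' \<longleftrightarrow> (\<exists>c. (\<forall>r\<in>R. 0 \<le> c r) \<and> (\<forall>i. (\<Sum>r\<in>R. c r * fst r i) = fst r' i)
      \<and> (\<Sum>r\<in>R. c r * snd r) = snd r')"

lemma sum_if_eq_mult:
  fixes f :: "'a \<Rightarrow> 'b::semiring_0"
  assumes "finite R" "a \<in> R"
  shows "(\<Sum>r\<in>R. (if r = a then k else 0) * f r) = k * f a"
  using assms by (simp add: if_distrib[of "\<lambda>c. c * _"] cong: if_cong)

lemma nonneg_combination_trans:
  assumes "\<forall>r'\<in>R'. nonneg_combination R r'" and "\<forall>r'\<in>R'. 0 \<le> u' r'"
  shows "nonneg_combination R (\<lambda>i. \<Sum>r'\<in>R'. u' r' * fst r' i, \<Sum>r'\<in>R'. u' r' * snd r')"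
proof -
  obtain C where C: "\<And>r'. r' \<in> R' \<Longrightarrow> (\<forall>r\<in>R. 0 \<le> C r' r)
      \<and> (\<forall>i. (\<Sum>r\<in>R. C r' r * fst r i) = fst r' i) \<and> (\<Sum>r\<in>R. C r' r * snd r) = snd r'"
    using bchoice[OF assms(1)[unfolded nonneg_combination_def]] by blast
  define c where "c r = (\<Sum>r'\<in>R'. u' r' * C r' r)" for r
  have comb: "(\<Sum>r\<in>R. c r * f r) = (\<Sum>r'\<in>R'. u' r' * (\<Sum>r\<in>R. C r' r * f r))"
    for f :: "_ \<Rightarrow> real"
    unfolding c_def sum_distrib_right sum_distrib_left by (subst sum.swap) (simp add: mult.assoc)
  have "\<forall>r\<in>R. 0 \<le> c r" unfolding c_def using C assms(2) by (auto intro!: sum_nonneg)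
  moreover have "(\<Sum>r\<in>R. c r * fst r i) = (\<Sum>r'\<in>R'. u' r' * fst r' i)" for i
    unfolding comb using C by simp
  moreover have "(\<Sum>r\<in>R. c r * snd r) = (\<Sum>r'\<in>R'. u' r' * snd r')"
    unfolding comb using C by simp
  ultimately show ?thesis unfolding nonneg_combination_def by (intro exI[of _ c]) simp
qed

lemma exists_between_finite:
  fixes up lo :: "'a \<Rightarrow> real"
  assumes "finite P" "finite N" "\<And>p q. p \<in> P \<Longrightarrow> q \<in> N \<Longrightarrow> lo q \<le> up p"
  shows "\<exists>t. (\<forall>p\<in>P. t \<le> up p) \<and> (\<forall>q\<in>N. lo q \<le> t)"
proof (cases "P = {}")
  case True
  show ?thesis
    by (rule exI[of _ "if N = {} then 0 else Max (lo ` N)"]) (use True assms(2) in auto)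
next
  case False
  show ?thesis
    by (rule exI[of _ "Min (up ` P)"]) (use False assms in \<open>auto intro: Min.boundedI\<close>)
qed

definition fourier_motzkin_combine ::
    "'j \<Rightarrow> ('j \<Rightarrow> real) \<times> real \<Rightarrow> ('j \<Rightarrow> real) \<times> real \<Rightarrow> ('j \<Rightarrow> real) \<times> real" where
  "fourier_motzkin_combine j p q =
     ((\<lambda>i. - fst q j * fst p i + fst p j * fst q i), - fst q j * snd p + fst p j * snd q)"

definition fourier_motzkin_eliminate ::
    "'j \<Rightarrow> (('j \<Rightarrow> real) \<times> real) set \<Rightarrow> (('j \<Rightarrow> real) \<times> real) set" where
  "fourier_motzkin_eliminate j R = {r\<in>R. fst r j = 0}
     \<union> (\<lambda>(p, q). fourier_motzkin_combine j p q) ` ({p\<in>R. 0 < fst p j} \<times> {q\<in>R. fst q j < 0})"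

lemma finite_fourier_motzkin_eliminate: "finite R \<Longrightarrow> finite (fourier_motzkin_eliminate j R)"
  unfolding fourier_motzkin_eliminate_def by auto

lemma fourier_motzkin_eliminate_coeff: "r \<in> fourier_motzkin_eliminate j R \<Longrightarrow> fst r j = 0"
  unfolding fourier_motzkin_eliminate_def fourier_motzkin_combine_def by auto

lemma nonneg_combination_fourier_motzkin_eliminate:
  assumes "finite R" "r' \<in> fourier_motzkin_eliminate j R"
  shows "nonneg_combination R r'"
proof -
  consider "r' \<in> R"
    | p q where "p \<in> R" "q \<in> R" "0 < fst p j" "fst q j < 0" "r' = fourier_motzkin_combine j p q"
    using assms(2) unfolding fourier_motzkin_eliminate_def by auto
  then show ?thesis
  proof cases
    case 1
    then show ?thesis
      unfolding nonneg_combination_def using assms(1)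
      by (intro exI[of _ "\<lambda>r. if r = r' then 1 else 0"]) (simp add: sum_if_eq_mult)
  next
    case (2 p q)
    define c where "c r = (if r = p then - fst q j else 0) + (if r = q then fst p j else 0)" for r
    have "p \<noteq> q" using 2 by auto
    then have comb: "(\<Sum>r\<in>R. c r * f r) = - fst q j * f p + fst p j * f q" for f :: "_ \<Rightarrow> real"
      unfolding c_def distrib_right sum.distrib using assms(1) 2 by (simp add: sum_if_eq_mult)
    have "\<forall>r\<in>R. 0 \<le> c r" using 2 unfolding c_def by auto
    then show ?thesis
      unfolding nonneg_combination_def 2(5) fourier_motzkin_combine_def
      by (intro exI[of _ c]) (simp add: comb[of "\<lambda>r. fst r _"] comb[of snd])
  qed
qed

lemma lin_feasible_fourier_motzkin_extend:
  assumes "finite J" "j \<notin> J" "finite R" "lin_feasible J (fourier_motzkin_eliminate j R) z"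
  shows "\<exists>t. lin_feasible (insert j J) R (z(j := t))"
proof -
  define P where "P = {p\<in>R. 0 < fst p j}"
  define N where "N = {q\<in>R. fst q j < 0}"
  define s where "s r = (\<Sum>i\<in>J. fst r i * z i)" for r :: "('a \<Rightarrow> real) \<times> real"
  define bound where "bound r = (snd r - s r) / fst r j" for r
  have s_comb: "s (fourier_motzkin_combine j p q) = - fst q j * s p + fst p j * s q" for p q
    unfolding s_def fourier_motzkin_combine_def sum_distrib_left sum.distrib[symmetric]
    by (intro sum.cong) (auto simp: algebra_simps)
  have "bound q \<le> bound p" if "p \<in> P" "q \<in> N" for p q
  proof -
    have pj: "0 < fst p j" and qj: "fst q j < 0" using that unfolding P_def N_def by auto
    have "fourier_motzkin_combine j p q \<in> fourier_motzkin_eliminate j R"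
      using that unfolding fourier_motzkin_eliminate_def P_def N_def by auto
    then have "s (fourier_motzkin_combine j p q) \<le> snd (fourier_motzkin_combine j p q)"
      using assms(4) unfolding lin_feasible_def s_def by blast
    then have "- fst q j * s p + fst p j * s q \<le> - fst q j * snd p + fst p j * snd q"
      unfolding s_comb by (simp add: fourier_motzkin_combine_def)
    then show ?thesis
      using pj qj unfolding bound_def by (simp add: field_simps)
  qed
  moreover have "finite P" "finite N" using assms(3) unfolding P_def N_def by auto
  ultimately obtain t where t: "\<forall>p\<in>P. t \<le> bound p" "\<forall>q\<in>N. bound q \<le> t"
    using exists_between_finite[of P N bound bound] by blast
  have "(\<Sum>i\<in>insert j J. fst r i * (z(j := t)) i) \<le> snd r" if r: "r \<in> R" for r
  proof -
    have "(\<Sum>i\<in>J. fst r i * (z(j := t)) i) = s r"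
      unfolding s_def using assms(2) by (intro sum.cong) auto
    then have sum_eq: "(\<Sum>i\<in>insert j J. fst r i * (z(j := t)) i) = fst r j * t + s r"
      using assms(1,2) by simp
    consider "fst r j = 0" | "r \<in> P" | "r \<in> N" using r unfolding P_def N_def by force
    then show ?thesis
    proof cases
      case 1
      then have "r \<in> fourier_motzkin_eliminate j R" using r unfolding fourier_motzkin_eliminate_def by auto
      then show ?thesis using 1 assms(4) unfolding sum_eq lin_feasible_def s_def by auto
    next
      case 2
      have "0 < fst r j" "t \<le> bound r" using 2 t(1) unfolding P_def by blast+
      then show ?thesis unfolding sum_eq bound_def by (simp add: field_simps)
    next
      case 3
      have "fst r j < 0" "bound r \<le> t" using 3 t(2) unfolding N_def by blast+
      then show ?thesis unfolding sum_eq bound_def by (simp add: field_simps)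
    qed
  qed
  then show ?thesis unfolding lin_feasible_def by blast
qed

lemma farkas_lemma_rows:
  assumes "finite J" "finite R" "\<nexists>z. lin_feasible J R z"
  shows "\<exists>u. farkas_certificate J R u"
  using assms
proof (induction J arbitrary: R rule: finite_induct)
  case empty
  then obtain r where r: "r \<in> R" "snd r < 0" unfolding lin_feasible_def by force
  then have "farkas_certificate {} R (\<lambda>r'. if r' = r then 1 else 0)"
    using empty.prems(1) unfolding farkas_certificate_def by (simp add: sum_if_eq_mult)
  then show ?case by blast
next
  case (insert j J)
  have "\<nexists>z. lin_feasible J (fourier_motzkin_eliminate j R) z"
    using lin_feasible_fourier_motzkin_extend[OF insert.hyps(1,2) insert.prems(1)] insert.prems(2) by blast
  then obtain u' where u': "farkas_certificate J (fourier_motzkin_eliminate j R) u'"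
    using insert.IH finite_fourier_motzkin_eliminate[OF insert.prems(1)] by blast
  then have "nonneg_combination R (\<lambda>i. \<Sum>r'\<in>fourier_motzkin_eliminate j R. u' r' * fst r' i,
      \<Sum>r'\<in>fourier_motzkin_eliminate j R. u' r' * snd r')"
    using nonneg_combination_fourier_motzkin_eliminate[OF insert.prems(1)]
    unfolding farkas_certificate_def by (intro nonneg_combination_trans) auto
  then obtain u where "\<forall>r\<in>R. 0 \<le> u r"
      "\<forall>i. (\<Sum>r\<in>R. u r * fst r i) = (\<Sum>r'\<in>fourier_motzkin_eliminate j R. u' r' * fst r' i)"
      "(\<Sum>r\<in>R. u r * snd r) = (\<Sum>r'\<in>fourier_motzkin_eliminate j R. u' r' * snd r')"
    unfolding nonneg_combination_def by auto
  then have "farkas_certificate (insert j J) R u"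
    using u' fourier_motzkin_eliminate_coeff[of _ j R] unfolding farkas_certificate_def by auto
  then show ?case by blast
qed

lemma sum_divide_card_fibres:
  assumes "finite I"
  shows "(\<Sum>k\<in>I. F (h k) / real (card {k'\<in>I. h k' = h k})) = (\<Sum>\<rho>\<in>h ` I. (F \<rho> :: real))"
proof -
  have "(\<Sum>k\<in>I. F (h k) / real (card {k'\<in>I. h k' = h k}))
      = (\<Sum>\<rho>\<in>h ` I. \<Sum>k\<in>{k\<in>I. h k = \<rho>}. F (h k) / real (card {k'\<in>I. h k' = h k}))"
    by (rule sum.image_gen[OF assms])
  also have "\<dots> = (\<Sum>\<rho>\<in>h ` I. F \<rho>)"
  proof (rule sum.cong[OF refl])
    fix \<rho> assume "\<rho> \<in> h ` I"
    then have "card {k\<in>I. h k = \<rho>} \<noteq> 0" using assms by auto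
    moreover have "(\<Sum>k\<in>{k\<in>I. h k = \<rho>}. F (h k) / real (card {k'\<in>I. h k' = h k}))
        = (\<Sum>k\<in>{k\<in>I. h k = \<rho>}. F \<rho> / real (card {k'\<in>I. h k' = \<rho>}))"
      by (rule sum.cong) auto
    ultimately show "(\<Sum>k\<in>{k\<in>I. h k = \<rho>}. F (h k) / real (card {k'\<in>I. h k' = h k})) = F \<rho>"
      by simp
  qed
  finally show ?thesis .
qed

text \<open>Duplicate rows are merged to apply \<open>farkas_lemma_rows\<close>; the multiplier of a merged row
  is then shared evenly among its copies.\<close>

lemma farkas_lemma:
  fixes A :: "'r \<Rightarrow> 'j \<Rightarrow> real" and b :: "'r \<Rightarrow> real"
  assumes "finite J" "finite I" "\<nexists>z. \<forall>k\<in>I. (\<Sum>i\<in>J. A k i * z i) \<le> b k"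
  shows "\<exists>u. (\<forall>k\<in>I. 0 \<le> u k) \<and> (\<forall>i\<in>J. (\<Sum>k\<in>I. u k * A k i) = 0) \<and> (\<Sum>k\<in>I. u k * b k) < 0"
proof -
  define h where "h k = (A k, b k)" for k
  have "\<nexists>z. lin_feasible J (h ` I) z" using assms(3) unfolding lin_feasible_def h_def by auto
  then obtain u where u: "farkas_certificate J (h ` I) u"
    using farkas_lemma_rows[OF assms(1) finite_imageI[OF assms(2)]] by blast
  define v where "v k = u (h k) / real (card {k'\<in>I. h k' = h k})" for k
  have v_sum: "(\<Sum>k\<in>I. v k * g (h k)) = (\<Sum>\<rho>\<in>h ` I. u \<rho> * g \<rho>)" for g
    unfolding v_def using sum_divide_card_fibres[OF assms(2), of "\<lambda>\<rho>. u \<rho> * g \<rho>" h]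
    by (simp add: field_simps)
  have "\<forall>k\<in>I. 0 \<le> v k" using u unfolding farkas_certificate_def v_def by auto
  moreover have "\<forall>i\<in>J. (\<Sum>k\<in>I. v k * A k i) = 0"
    using u v_sum[of "\<lambda>\<rho>. fst \<rho> _"] unfolding farkas_certificate_def h_def by simp
  moreover have "(\<Sum>k\<in>I. v k * b k) < 0"
    using u v_sum[of snd] unfolding farkas_certificate_def h_def by simp
  ultimately show ?thesis by blast
qed

lemma farkas_lemma_nonneg:
  fixes A :: "'r \<Rightarrow> 'j \<Rightarrow> real" and b :: "'r \<Rightarrow> real"
  assumes "finite J" "finite I" "\<nexists>z. (\<forall>i\<in>J. 0 \<le> z i) \<and> (\<forall>k\<in>I. (\<Sum>i\<in>J. A k i * z i) \<le> b k)"
  shows "\<exists>u. (\<forall>k\<in>I. 0 \<le> u k) \<and> (\<forall>i\<in>J. 0 \<le> (\<Sum>k\<in>I. u k * A k i)) \<and> (\<Sum>k\<in>I. u k * b k) < 0"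
proof -
  define A' where "A' r i = (case r of Inl k \<Rightarrow> A k i | Inr i' \<Rightarrow> if i' = i then -1 else 0)" for r i
  define b' where "b' r = (case r of Inl k \<Rightarrow> b k | Inr _ \<Rightarrow> 0)" for r :: "'r + 'j"
  have sum_rows: "(\<Sum>r\<in>Inl ` I \<union> Inr ` J. f r) = (\<Sum>k\<in>I. f (Inl k)) + (\<Sum>i\<in>J. f (Inr i))"
    for f :: "_ \<Rightarrow> real"
    using assms(1,2) by (subst sum.union_disjoint) (auto simp: sum.reindex)
  have "\<nexists>z. \<forall>r\<in>Inl ` I \<union> Inr ` J. (\<Sum>i\<in>J. A' r i * z i) \<le> b' r"
  proof
    assume "\<exists>z. \<forall>r\<in>Inl ` I \<union> Inr ` J. (\<Sum>i\<in>J. A' r i * z i) \<le> b' r"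
    then obtain z where z: "\<forall>r\<in>Inl ` I \<union> Inr ` J. (\<Sum>i\<in>J. A' r i * z i) \<le> b' r" by blast
    have "0 \<le> z i" if "i \<in> J" for i
      using z[rule_format, of "Inr i"] that sum_if_eq_mult[OF assms(1) that, of "-1" z]
      unfolding A'_def b'_def by (simp add: eq_commute[of i])
    moreover have "(\<Sum>i\<in>J. A k i * z i) \<le> b k" if "k \<in> I" for k
      using z[rule_format, of "Inl k"] that unfolding A'_def b'_def by simp
    ultimately show False using assms(3) by blast
  qed
  moreover have "finite (Inl ` I \<union> Inr ` J)" using assms(1,2) by simp
  ultimately obtain u where u: "\<forall>r\<in>Inl ` I \<union> Inr ` J. 0 \<le> u r"
      "\<forall>i\<in>J. (\<Sum>r\<in>Inl ` I \<union> Inr ` J. u r * A' r i) = 0" "(\<Sum>r\<in>Inl ` I \<union> Inr ` J. u r * b' r) < 0"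
    using farkas_lemma[OF assms(1)] by blast
  have "(\<Sum>k\<in>I. u (Inl k) * A k i) = u (Inr i)" if "i \<in> J" for i
    using u(2)[rule_format, OF that] sum_if_eq_mult[OF assms(1) that, of "-1" "\<lambda>i'. u (Inr i')"]
    unfolding sum_rows by (simp add: A'_def ac_simps)
  then show ?thesis
    using u(1,3) unfolding sum_rows by (intro exI[of _ "\<lambda>k. u (Inl k)"]) (simp add: b'_def)
qed

lemma packing_dual_certificate:
  fixes a :: "'e \<Rightarrow> 'w \<Rightarrow> real" and x :: "'e \<Rightarrow> real"
  assumes "finite E" "finite W" "\<forall>e\<in>E. 0 \<le> x e"
    and bound: "\<And>z. \<forall>e\<in>E. (\<Sum>w\<in>W. a e w * z w) \<le> x e \<Longrightarrow> \<forall>w\<in>W. 0 \<le> z w \<Longrightarrow> (\<Sum>w\<in>W. z w) < t"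
  shows "\<exists>y. (\<forall>e\<in>E. 0 \<le> y e) \<and> (\<forall>w\<in>W. 1 \<le> (\<Sum>e\<in>E. a e w * y e)) \<and> (\<Sum>e\<in>E. y e * x e) < t"
proof -
  define A where "A k w = (case k of Some e \<Rightarrow> a e w | None \<Rightarrow> -1)" for k w
  define b where "b k = (case k of Some e \<Rightarrow> x e | None \<Rightarrow> - t)" for k
  have sum_rows: "(\<Sum>k\<in>insert None (Some ` E). f k) = f None + (\<Sum>e\<in>E. f (Some e))"
    for f :: "_ \<Rightarrow> real"
    using assms(1) by (simp add: sum.reindex)
  have "\<nexists>z. (\<forall>w\<in>W. 0 \<le> z w) \<and> (\<forall>k\<in>insert None (Some ` E). (\<Sum>w\<in>W. A k w * z w) \<le> b k)"
  proof
    assume "\<exists>z. (\<forall>w\<in>W. 0 \<le> z w) \<and> (\<forall>k\<in>insert None (Some ` E). (\<Sum>w\<in>W. A k w * z w) \<le> b k)"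
    then obtain z where z: "\<forall>w\<in>W. 0 \<le> z w" "\<forall>k\<in>insert None (Some ` E). (\<Sum>w\<in>W. A k w * z w) \<le> b k"
      by blast
    have "(\<Sum>w\<in>W. a e w * z w) \<le> x e" if "e \<in> E" for e
      using z(2)[rule_format, of "Some e"] that unfolding A_def b_def by simp
    then have "(\<Sum>w\<in>W. z w) < t" using bound z(1) by blast
    moreover have "t \<le> (\<Sum>w\<in>W. z w)"
      using z(2)[rule_format, of None] unfolding A_def b_def by (simp add: sum_negf)
    ultimately show False by simp
  qed
  moreover have "finite (insert None (Some ` E))" using assms(1) by simp
  ultimately obtain u where "\<forall>k\<in>insert None (Some ` E). 0 \<le> u k"
      "\<forall>w\<in>W. 0 \<le> (\<Sum>k\<in>insert None (Some ` E). u k * A k w)"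
      "(\<Sum>k\<in>insert None (Some ` E). u k * b k) < 0"
    using farkas_lemma_nonneg[OF assms(2)] by blast
  then have u: "\<forall>k\<in>insert None (Some ` E). 0 \<le> u k"
      "\<forall>w\<in>W. u None \<le> (\<Sum>e\<in>E. u (Some e) * a e w)"
      "(\<Sum>e\<in>E. u (Some e) * x e) < u None * t"
    unfolding sum_rows by (simp_all add: A_def b_def)
  define c where "c = u None"
  define y where "y e = u (Some e) / c" for e
  have "0 \<le> (\<Sum>e\<in>E. u (Some e) * x e)" using u(1) assms(3) by (intro sum_nonneg) simp
  then have "0 < c" using u(1,3) unfolding c_def by (cases "u None = 0") auto
  have "\<forall>e\<in>E. 0 \<le> y e" using u(1) \<open>0 < c\<close> unfolding y_def by simp
  moreover have "1 \<le> (\<Sum>e\<in>E. a e w * y e)" if "w \<in> W" for w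
  proof -
    have "(\<Sum>e\<in>E. a e w * y e) = (\<Sum>e\<in>E. u (Some e) * a e w) / c"
      unfolding y_def sum_divide_distrib by (simp add: ac_simps)
    then show ?thesis using u(2) that \<open>0 < c\<close> unfolding c_def by simp
  qed
  moreover have "(\<Sum>e\<in>E. y e * x e) < t"
  proof -
    have "(\<Sum>e\<in>E. y e * x e) = (\<Sum>e\<in>E. u (Some e) * x e) / c"
      unfolding y_def sum_divide_distrib by simp
    then show ?thesis using u(3) \<open>0 < c\<close> unfolding c_def by (simp add: pos_divide_less_eq mult.commute)
  qed
  ultimately show ?thesis by blast
qed

section \<open>Closed walks as vertex lists\<close>

fun arcs :: "'a list \<Rightarrow> ('a \<times> 'a) list" where
  "arcs (a # b # xs) = (a, b) # arcs (b # xs)"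
| "arcs _ = []"

lemma arcs_eq_zip: "arcs xs = zip xs (tl xs)"
  by (induction xs rule: arcs.induct) auto

lemma set_arcs: "set (arcs vs) = {(vs ! i, vs ! Suc i) | i. Suc i < length vs}"
  unfolding arcs_eq_zip set_zip by (auto simp: nth_tl)

lemma arcs_append: "arcs (xs @ y # ys) = arcs (xs @ [y]) @ arcs (y # ys)"
  by (induction xs rule: arcs.induct) auto

lemma arcs_rev: "arcs (rev xs) = rev (map prod.swap (arcs xs))"
proof (induction xs rule: arcs.induct)
  case (1 a b xs)
  have "arcs (rev (a # b # xs)) = arcs (rev xs @ [b]) @ arcs [b, a]"
    using arcs_append[of "rev xs" b "[a]"] by simp
  then show ?case using 1 by simp
qed simp_all

lemma arcs_join:
  assumes "p \<noteq> []" "q \<noteq> []" "last p = hd q"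
  shows "arcs (p @ tl q) = arcs p @ arcs q"
proof -
  obtain p0 v q0 where "p = p0 @ [v]" "q = v # q0"
    using assms by (metis append_butlast_last_id list.collapse)
  then show ?thesis using arcs_append[of p0 v q0] by simp
qed

definition edge_count :: "('a \<times> 'a) list \<Rightarrow> 'a set \<Rightarrow> nat" where
  "edge_count L e = length (filter (\<lambda>p. {fst p, snd p} = e) L)"

lemma edge_count_append [simp]: "edge_count (L @ M) e = edge_count L e + edge_count M e"
  unfolding edge_count_def by simp

lemma edge_count_Cons [simp]:
  "edge_count (p # L) e = (if {fst p, snd p} = e then 1 else 0) + edge_count L e"
  unfolding edge_count_def by simp

lemma edge_count_rev_swap [simp]: "edge_count (rev (map prod.swap L)) e = edge_count L e"
  unfolding edge_count_def by (induction L) (auto simp: insert_commute)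

lemma edge_count_doubleton:
  assumes "a \<noteq> b"
  shows "edge_count L {a, b} = length (filter ((=) (a, b)) L) + length (filter ((=) (b, a)) L)"
  unfolding edge_count_def using assms by (induction L) (auto simp: doubleton_eq_iff)

lemma sum_edge_count:
  assumes "finite E" "\<forall>p\<in>set L. {fst p, snd p} \<in> E"
  shows "(\<Sum>e\<in>E. real (edge_count L e) * f e) = (\<Sum>p\<leftarrow>L. f {fst p, snd p})"
  using assms(2)
proof (induction L)
  case (Cons p L)
  then show ?case
    using assms(1) by (simp add: distrib_right sum.distrib if_distrib[of "\<lambda>c. real c * _"] cong: if_cong)
qed (simp add: edge_count_def)

lemma walk_vector_eq_edge_count: "walk_vector vs e = edge_count (arcs vs) e"
proof -
  have "edge_count (arcs vs) e = card {i. i < length (zip vs (tl vs)) \<and>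
      {fst (zip vs (tl vs) ! i), snd (zip vs (tl vs) ! i)} = e}"
    unfolding edge_count_def arcs_eq_zip by (rule length_filter_conv_card)
  also have "\<dots> = walk_vector vs e"
    unfolding walk_vector_def by (rule arg_cong[of _ _ card]) (auto simp: nth_tl)
  finally show ?thesis by simp
qed

lemma closed_covering_walk_iff:
  "closed_covering_walk V E vs \<longleftrightarrow> vs \<noteq> [] \<and> hd vs = last vs \<and> set vs = V \<and>
     (\<forall>p\<in>set (arcs vs). {fst p, snd p} \<in> E \<and> fst p \<noteq> snd p)"
  unfolding closed_covering_walk_def set_arcs by auto

lemma arc_occurrence_split:
  assumes "Suc k \<le> length (filter ((=) (a, b)) (arcs xs))"
  shows "\<exists>A C. xs = A @ a # b # C \<and> k \<le> length (filter ((=) (a, b)) (arcs (b # C)))"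
  using assms
proof (induction xs rule: arcs.induct)
  case (1 a' b' xs)
  show ?case
  proof (cases "(a', b') = (a, b)")
    case True
    then show ?thesis using "1.prems" by (intro exI[of _ "[]"] exI[of _ xs]) simp
  next
    case False
    then have "Suc k \<le> length (filter ((=) (a, b)) (arcs (b' # xs)))" using "1.prems" by auto
    then obtain A C where "b' # xs = A @ a # b # C" "k \<le> length (filter ((=) (a, b)) (arcs (b # C)))"
      using "1.IH" by blast
    then show ?thesis by (intro exI[of _ "a' # A"] exI[of _ C]) simp
  qed
qed simp_all

lemma arc_twice_split:
  assumes "2 \<le> length (filter ((=) (a, b)) (arcs xs))" "a \<noteq> b"
  shows "\<exists>A B C. xs = A @ a # b # B @ a # b # C"
proof -
  obtain A C1 where 1: "xs = A @ a # b # C1" "1 \<le> length (filter ((=) (a, b)) (arcs (b # C1)))"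
    using arc_occurrence_split[of 1 a b xs] assms(1) by auto
  obtain A2 C where 2: "b # C1 = A2 @ a # b # C"
    using arc_occurrence_split[of 0 a b "b # C1"] 1(2) by auto
  then obtain B where "A2 = b # B" using assms(2) by (cases A2) auto
  then have "xs = A @ a # b # B @ a # b # C" using 1 2 by simp
  then show ?thesis by blast
qed

lemma arcs_shortcut:
  "arcs (A @ a # b # B @ a # b # C)
     = arcs (A @ [a]) @ (a, b) # arcs (b # B @ [a]) @ (a, b) # arcs (b # C)"
  "arcs (A @ a # rev B @ b # C)
     = arcs (A @ [a]) @ rev (map prod.swap (arcs (b # B @ [a]))) @ arcs (b # C)"
proof -
  show "arcs (A @ a # b # B @ a # b # C)
     = arcs (A @ [a]) @ (a, b) # arcs (b # B @ [a]) @ (a, b) # arcs (b # C)"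
    using arcs_append[of A a "b # B @ a # b # C"] arcs_append[of "b # B" a "b # C"] by simp
  have "arcs (a # rev B @ b # C) = arcs (rev (b # B @ [a])) @ arcs (b # C)"
    using arcs_append[of "a # rev B" b C] by simp
  then show "arcs (A @ a # rev B @ b # C)
     = arcs (A @ [a]) @ rev (map prod.swap (arcs (b # B @ [a]))) @ arcs (b # C)"
    using arcs_append[of A a "rev B @ b # C"] by (simp only: arcs_rev append_Cons)
qed

text \<open>An edge used three times is used twice in the same direction, say as \<open>\<dots>ab\<dots>ab\<dots>\<close>;
  traversing the closed segment \<open>b\<dots>a\<close> between them backwards removes both uses.\<close>

lemma closed_covering_walk_shortcut:
  assumes walk: "closed_covering_walk V E vs" and "3 \<le> edge_count (arcs vs) e"
  shows "\<exists>vs'. closed_covering_walk V E vs' \<and> length vs' < length vs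
    \<and> (\<forall>e. edge_count (arcs vs') e \<le> edge_count (arcs vs) e)"
proof -
  have "filter (\<lambda>p. {fst p, snd p} = e) (arcs vs) \<noteq> []"
    using assms(2) unfolding edge_count_def by auto
  then obtain p where p: "p \<in> set (arcs vs)" "{fst p, snd p} = e"
    by (auto simp: filter_empty_conv)
  then have "fst p \<noteq> snd p" using walk unfolding closed_covering_walk_iff by blast
  then have three: "3 \<le> length (filter ((=) (fst p, snd p)) (arcs vs))
      + length (filter ((=) (snd p, fst p)) (arcs vs))"
    using edge_count_doubleton[OF \<open>fst p \<noteq> snd p\<close>, of "arcs vs"] assms(2) p(2) by simp
  then obtain a b where ab: "a \<noteq> b" "2 \<le> length (filter ((=) (a, b)) (arcs vs))"
  proof (cases "2 \<le> length (filter ((=) (fst p, snd p)) (arcs vs))")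
    case True
    then show ?thesis using that[of "fst p" "snd p"] \<open>fst p \<noteq> snd p\<close> by simp
  next
    case False
    then have "2 \<le> length (filter ((=) (snd p, fst p)) (arcs vs))" using three by linarith
    then show ?thesis using that[of "snd p" "fst p"] \<open>fst p \<noteq> snd p\<close> by simp
  qed
  obtain A B C where vs: "vs = A @ a # b # B @ a # b # C" using arc_twice_split[OF ab(2,1)] by blast
  define vs' where "vs' = A @ a # rev B @ b # C"
  have arcs_vs': "set (arcs vs') \<subseteq> set (arcs vs) \<union> prod.swap ` set (arcs vs)"
    unfolding vs vs'_def arcs_shortcut by auto
  have "closed_covering_walk V E vs'"
    unfolding closed_covering_walk_iff
  proof (intro conjI)
    show "vs' \<noteq> []" "set vs' = V" "hd vs' = last vs'"
      using walk unfolding closed_covering_walk_iff vs vs'_def by (auto simp: hd_append last_append)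
    show "\<forall>q\<in>set (arcs vs'). {fst q, snd q} \<in> E \<and> fst q \<noteq> snd q"
    proof
      fix q assume "q \<in> set (arcs vs')"
      then have "q \<in> set (arcs vs) \<or> prod.swap q \<in> set (arcs vs)" using arcs_vs' by force
      then show "{fst q, snd q} \<in> E \<and> fst q \<noteq> snd q"
        using walk unfolding closed_covering_walk_iff by (cases q) (auto simp: insert_commute)
    qed
  qed
  moreover have "length vs' < length vs" unfolding vs vs'_def by simp
  moreover have "\<forall>e. edge_count (arcs vs') e \<le> edge_count (arcs vs) e"
    unfolding vs vs'_def arcs_shortcut by simp
  ultimately show ?thesis by blast
qed

lemma closed_covering_walk_reduce:
  assumes "closed_covering_walk V E vs"
  shows "\<exists>vs'. closed_covering_walk V E vs' \<and> (\<forall>e. edge_count (arcs vs') e \<le> edge_count (arcs vs) e)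
    \<and> (\<forall>e. edge_count (arcs vs') e \<le> 2)"
  using assms
proof (induction "length vs" arbitrary: vs rule: less_induct)
  case less
  show ?case
  proof (cases "\<forall>e. edge_count (arcs vs) e \<le> 2")
    case True
    then show ?thesis using less.prems by blast
  next
    case False
    then obtain e where "\<not> edge_count (arcs vs) e \<le> 2" by blast
    then have "3 \<le> edge_count (arcs vs) e" by simp
    then obtain vs1 where vs1: "closed_covering_walk V E vs1" "length vs1 < length vs"
        "\<forall>e. edge_count (arcs vs1) e \<le> edge_count (arcs vs) e"
      using closed_covering_walk_shortcut[OF less.prems] by blast
    then obtain vs' where "closed_covering_walk V E vs'"
        "\<forall>e. edge_count (arcs vs') e \<le> edge_count (arcs vs1) e" "\<forall>e. edge_count (arcs vs') e \<le> 2"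
      using less.hyps by blast
    then show ?thesis using vs1(3) le_trans by blast
  qed
qed

section \<open>Truncated shortest-path distances\<close>

definition path_in :: "nat \<Rightarrow> nat set set \<Rightarrow> nat list \<Rightarrow> bool" where
  "path_in n E p \<longleftrightarrow> p \<noteq> [] \<and> set p \<subseteq> {..<n} \<and> (\<forall>q\<in>set (arcs p). {fst q, snd q} \<in> E)"

definition path_length :: "(nat set \<Rightarrow> real) \<Rightarrow> nat list \<Rightarrow> real" where
  "path_length y p = (\<Sum>q\<leftarrow>arcs p. y {fst q, snd q})"

definition capped_lengths :: "nat \<Rightarrow> nat set set \<Rightarrow> (nat set \<Rightarrow> real) \<Rightarrow> nat \<Rightarrow> nat \<Rightarrow> real set" where
  "capped_lengths n E y u v = insert 1 {path_length y p | p. path_in n E p \<and> hd p = u \<and> last p = v}"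

text \<open>Truncation at \<open>1\<close> keeps the infimum finite between different components of \<open>E\<close>;
  lengths beyond \<open>1\<close> never matter below.\<close>

definition capped_dist :: "nat \<Rightarrow> nat set set \<Rightarrow> (nat set \<Rightarrow> real) \<Rightarrow> nat \<Rightarrow> nat \<Rightarrow> real" where
  "capped_dist n E y u v = Inf (capped_lengths n E y u v)"

lemma path_in_rev: "path_in n E p \<Longrightarrow> path_in n E (rev p)"
  unfolding path_in_def arcs_rev by (auto simp: insert_commute)

lemma path_length_rev: "path_length y (rev p) = path_length y p"
  unfolding path_length_def arcs_rev by (simp add: rev_map[symmetric] sum_list_rev comp_def insert_commute)

lemma capped_dist_sym: "capped_dist n E y u v = capped_dist n E y v u"
proof -
  have "capped_lengths n E y u v \<subseteq> capped_lengths n E y v u" for u v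
  proof
    fix a assume "a \<in> capped_lengths n E y u v"
    then consider "a = 1" | p where "path_in n E p" "hd p = u" "last p = v" "a = path_length y p"
      unfolding capped_lengths_def by auto
    then show "a \<in> capped_lengths n E y v u"
    proof cases
      case 2
      then have "path_in n E (rev p)" "hd (rev p) = v" "last (rev p) = u" "a = path_length y (rev p)"
        using path_in_rev path_length_rev by (auto simp: hd_rev last_rev)
      then show ?thesis unfolding capped_lengths_def by blast
    qed (simp add: capped_lengths_def)
  qed
  then have "capped_lengths n E y u v = capped_lengths n E y v u" by (intro subset_antisym)
  then show ?thesis unfolding capped_dist_def by simp
qed

definition edge_dist :: "nat \<Rightarrow> nat set set \<Rightarrow> (nat set \<Rightarrow> real) \<Rightarrow> nat set \<Rightarrow> real" where
  "edge_dist n E y e = capped_dist n E y (Min e) (Max e)"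

lemma edge_dist_doubleton: "edge_dist n E y {u, v} = capped_dist n E y u v"
  unfolding edge_dist_def by (cases "u \<le> v") (auto simp: min_def max_def capped_dist_sym)

lemma le_cInf_add:
  fixes S T :: "real set"
  assumes "S \<noteq> {}" "T \<noteq> {}" "bdd_below S" "bdd_below T" "\<And>a b. a \<in> S \<Longrightarrow> b \<in> T \<Longrightarrow> c \<le> a + b"
  shows "c \<le> Inf S + Inf T"
proof -
  have "c - a \<le> Inf T" if "a \<in> S" for a
  proof (rule cInf_greatest[OF assms(2)])
    fix b assume "b \<in> T"
    then show "c - a \<le> b" using assms(5)[OF that \<open>b \<in> T\<close>] by simp
  qed
  then have "c - Inf T \<le> Inf S"
    by (intro cInf_greatest[OF assms(1)]) (simp add: algebra_simps)
  then show ?thesis by simp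
qed

lemma path_in_join:
  assumes "path_in n E p" "path_in n E q" "last p = hd q"
  shows "path_in n E (p @ tl q)" "hd (p @ tl q) = hd p" "last (p @ tl q) = last q"
    "path_length y (p @ tl q) = path_length y p + path_length y q"
proof -
  have ne: "p \<noteq> []" "q \<noteq> []" using assms unfolding path_in_def by auto
  then have arcs: "arcs (p @ tl q) = arcs p @ arcs q" using arcs_join assms(3) by blast
  have "set (tl q) \<subseteq> set q" using ne by (cases q) auto
  then show "path_in n E (p @ tl q)" using assms ne unfolding path_in_def arcs by auto
  show "hd (p @ tl q) = hd p" using ne by simp
  show "last (p @ tl q) = last q" using ne assms(3) by (cases q) (auto simp: last_append)
  show "path_length y (p @ tl q) = path_length y p + path_length y q"
    unfolding path_length_def arcs by simp
qed

context
  fixes n :: nat and E :: "nat set set" and y :: "nat set \<Rightarrow> real"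
  assumes y_nonneg: "\<forall>e\<in>E. 0 \<le> y e"
begin

lemma path_length_nonneg: "path_in n E p \<Longrightarrow> 0 \<le> path_length y p"
  unfolding path_in_def path_length_def using y_nonneg by (force intro: sum_list_nonneg)

lemma capped_lengths_nonneg: "a \<in> capped_lengths n E y u v \<Longrightarrow> 0 \<le> a"
  unfolding capped_lengths_def using path_length_nonneg by auto

lemma bdd_below_capped_lengths: "bdd_below (capped_lengths n E y u v)"
  using capped_lengths_nonneg by (rule bdd_belowI)

lemma capped_dist_nonneg: "0 \<le> capped_dist n E y u v"
  unfolding capped_dist_def
  by (rule cInf_greatest) (auto simp: capped_lengths_nonneg capped_lengths_def)

lemma capped_dist_le_path_length:
  "path_in n E p \<Longrightarrow> capped_dist n E y (hd p) (last p) \<le> path_length y p"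
  unfolding capped_dist_def
  by (rule cInf_lower[OF _ bdd_below_capped_lengths]) (auto simp: capped_lengths_def)

lemma capped_dist_le_edge:
  assumes "{u, v} \<in> E" "u < n" "v < n"
  shows "capped_dist n E y u v \<le> y {u, v}"
proof -
  have "path_in n E [u, v]" using assms unfolding path_in_def by auto
  then show ?thesis using capped_dist_le_path_length[of "[u, v]"] by (simp add: path_length_def)
qed

lemma capped_dist_approx:
  assumes "capped_dist n E y u v < c" "c \<le> 1"
  shows "\<exists>p. path_in n E p \<and> hd p = u \<and> last p = v \<and> path_length y p < c"
proof -
  obtain a where "a \<in> capped_lengths n E y u v" "a < c"
    using cInf_lessD[of "capped_lengths n E y u v"] assms(1)
    unfolding capped_dist_def capped_lengths_def by blast
  then show ?thesis using assms(2) unfolding capped_lengths_def by auto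
qed

lemma capped_dist_triangle: "capped_dist n E y u w \<le> capped_dist n E y u v + capped_dist n E y v w"
proof -
  have "capped_dist n E y u w \<le> a + b"
    if a: "a \<in> capped_lengths n E y u v" and b: "b \<in> capped_lengths n E y v w" for a b
  proof (cases "a = 1 \<or> b = 1")
    case True
    have "capped_dist n E y u w \<le> 1"
      unfolding capped_dist_def
      by (rule cInf_lower[OF _ bdd_below_capped_lengths]) (simp add: capped_lengths_def)
    moreover have "0 \<le> a" "0 \<le> b" using a b by (auto intro: capped_lengths_nonneg)
    ultimately show ?thesis using True by linarith
  next
    case False
    then obtain p q where p: "path_in n E p" "hd p = u" "last p = v" "a = path_length y p"
      and q: "path_in n E q" "hd q = v" "last q = w" "b = path_length y q"
      using a b unfolding capped_lengths_def by auto
    then have "capped_dist n E y (hd (p @ tl q)) (last (p @ tl q)) \<le> path_length y (p @ tl q)"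
      using path_in_join by (intro capped_dist_le_path_length) simp
    then show ?thesis using path_in_join[OF p(1) q(1)] p q by simp
  qed
  moreover have "capped_lengths n E y u v \<noteq> {}" "capped_lengths n E y v w \<noteq> {}"
    unfolding capped_lengths_def by auto
  ultimately show ?thesis
    unfolding capped_dist_def by (intro le_cInf_add bdd_below_capped_lengths) auto
qed
end

lemma En_doubletonD: "{a, b} \<in> En n \<Longrightarrow> a \<noteq> b \<and> a < n \<and> b < n"
  unfolding En_def by (auto simp: doubleton_eq_iff)

lemma finite_En: "finite (En n)"
  by (rule finite_subset[of _ "Pow {..<n}"]) (auto simp: En_def)

lemma walks_vanish_off_edges:
  assumes "w \<in> walks V E" "e \<notin> E"
  shows "w e = 0"
proof -
  obtain vs where "closed_covering_walk V E vs" "w = walk_vector vs"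
    using assms(1) unfolding walks_def by blast
  then show ?thesis
    using assms(2) unfolding closed_covering_walk_iff walk_vector_eq_edge_count edge_count_def
    by (auto simp: filter_empty_conv)
qed

lemma walks_mono: "E \<subseteq> E' \<Longrightarrow> walks V E \<subseteq> walks V E'"
  unfolding walks_def closed_covering_walk_iff by blast

lemma finite_walks:
  assumes "E \<subseteq> En n"
  shows "finite (walks V E)"
proof (rule finite_subset)
  show "walks V E \<subseteq> {w. \<forall>e. (e \<in> En n \<longrightarrow> w e \<in> {..2}) \<and> (e \<notin> En n \<longrightarrow> w e = 0)}"
  proof
    fix w assume w: "w \<in> walks V E"
    then have "\<forall>e. w e \<le> 2" unfolding walks_def by blast
    moreover have "\<forall>e. e \<notin> En n \<longrightarrow> w e = 0" using walks_vanish_off_edges[OF w] assms by blast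
    ultimately show "w \<in> {w. \<forall>e. (e \<in> En n \<longrightarrow> w e \<in> {..2}) \<and> (e \<notin> En n \<longrightarrow> w e = 0)}"
      by auto
  qed
  show "finite {w. \<forall>e. (e \<in> En n \<longrightarrow> w e \<in> {..2::nat}) \<and> (e \<notin> En n \<longrightarrow> w e = 0)}"
    by (rule finite_set_of_finite_funs) (auto simp: finite_En)
qed

lemma path_through_arcs:
  assumes "vs \<noteq> []" "set vs \<subseteq> {..<n}"
    and "\<forall>q\<in>set (arcs vs). \<exists>p. path_in n E p \<and> hd p = fst q \<and> last p = snd q \<and> path_length y p \<le> g q"
  shows "\<exists>P. path_in n E P \<and> hd P = hd vs \<and> last P = last vs \<and> set vs \<subseteq> set P
    \<and> path_length y P \<le> (\<Sum>q\<leftarrow>arcs vs. g q)"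
  using assms
proof (induction vs rule: arcs.induct)
  case (1 a b xs)
  have "b # xs \<noteq> []" "set (b # xs) \<subseteq> {..<n}"
    "\<forall>q\<in>set (arcs (b # xs)). \<exists>p. path_in n E p \<and> hd p = fst q \<and> last p = snd q \<and> path_length y p \<le> g q"
    using "1.prems" by auto
  then obtain P where P: "path_in n E P" "hd P = hd (b # xs)" "last P = last (b # xs)"
      "set (b # xs) \<subseteq> set P" "path_length y P \<le> (\<Sum>q\<leftarrow>arcs (b # xs). g q)"
    using "1.IH" by blast
  obtain p where p: "path_in n E p" "hd p = a" "last p = b" "path_length y p \<le> g (a, b)"
    using "1.prems"(3) by auto
  have "p \<noteq> []" "P \<noteq> []" using p(1) P(1) unfolding path_in_def by auto
  then have "set (a # b # xs) \<subseteq> set (p @ tl P)"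
    using p(2,3) P(2,4) by (cases P) auto
  then show ?case
    using path_in_join[OF p(1) P(1)] p P by (intro exI[of _ "p @ tl P"]) auto
next
  case ("2_2" v)
  then have "path_in n E [v]" unfolding path_in_def by auto
  then show ?case by (intro exI[of _ "[v]"]) (simp add: path_length_def)
qed simp

context
  fixes n :: nat and E :: "nat set set" and y :: "nat set \<Rightarrow> real"
  assumes E_sub: "E \<subseteq> En n" and y_nonneg: "\<forall>e\<in>E. 0 \<le> y e"
    and walks_long: "\<forall>w\<in>walks (Vn n) E. 1 \<le> (\<Sum>e\<in>E. real (w e) * y e)"
begin

lemma closed_covering_path_length_ge_one:
  assumes "path_in n E P" "hd P = last P" "set P = Vn n"
  shows "1 \<le> path_length y P"
proof -
  have arcs_E: "\<forall>q\<in>set (arcs P). {fst q, snd q} \<in> E" using assms(1) unfolding path_in_def by blast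
  then have "closed_covering_walk (Vn n) E P"
    using assms E_sub En_doubletonD unfolding closed_covering_walk_iff path_in_def by blast
  then obtain P' where P': "closed_covering_walk (Vn n) E P'"
      "\<forall>e. edge_count (arcs P') e \<le> edge_count (arcs P) e" "\<forall>e. edge_count (arcs P') e \<le> 2"
    using closed_covering_walk_reduce by blast
  then have "walk_vector P' \<in> walks (Vn n) E"
    unfolding walks_def walk_vector_eq_edge_count by blast
  then have "1 \<le> (\<Sum>e\<in>E. real (walk_vector P' e) * y e)" using walks_long by blast
  also have "\<dots> \<le> (\<Sum>e\<in>E. real (edge_count (arcs P) e) * y e)"
    unfolding walk_vector_eq_edge_count using P'(2) y_nonneg by (intro sum_mono mult_right_mono) auto
  also have "\<dots> = path_length y P"
    unfolding path_length_def using finite_subset[OF E_sub finite_En] arcs_E by (rule sum_edge_count)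
  finally show ?thesis .
qed

text \<open>Replace each arc of the walk by an almost shortest path in \<open>E\<close>; the concatenation is a
  closed walk through all nodes, hence of length at least \<open>1\<close>.\<close>

lemma sum_capped_dist_walk_ge_one:
  assumes walk: "closed_covering_walk (Vn n) (En n) vs"
  shows "1 \<le> (\<Sum>q\<leftarrow>arcs vs. capped_dist n E y (fst q) (snd q))"
proof (rule ccontr)
  define S where "S = (\<Sum>q\<leftarrow>arcs vs. capped_dist n E y (fst q) (snd q))"
  define \<delta> where "\<delta> = (1 - S) / (real (length (arcs vs)) + 1)"
  assume "\<not> 1 \<le> (\<Sum>q\<leftarrow>arcs vs. capped_dist n E y (fst q) (snd q))"
  then have "S < 1" unfolding S_def by simp
  then have "0 < \<delta>" unfolding \<delta>_def by simp
  have "(real (length (arcs vs)) + 1) * \<delta> = 1 - S" unfolding \<delta>_def by simp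
  then have \<delta>_eq: "real (length (arcs vs)) * \<delta> + \<delta> = 1 - S" by (simp add: distrib_right)
  have "0 \<le> real (length (arcs vs)) * \<delta>" using \<open>0 < \<delta>\<close> by simp
  then have "\<delta> \<le> 1 - S" "real (length (arcs vs)) * \<delta> < 1 - S" using \<delta>_eq \<open>0 < \<delta>\<close> by linarith+
  have "\<exists>p. path_in n E p \<and> hd p = fst q \<and> last p = snd q
      \<and> path_length y p \<le> capped_dist n E y (fst q) (snd q) + \<delta>" if "q \<in> set (arcs vs)" for q
  proof -
    have "capped_dist n E y (fst q) (snd q) \<le> S"
      unfolding S_def using that capped_dist_nonneg[OF y_nonneg] by (intro member_le_sum_list) auto
    then show ?thesis
      using capped_dist_approx[OF y_nonneg, where n=n and u="fst q" and v="snd q"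
          and c="capped_dist n E y (fst q) (snd q) + \<delta>"]
        \<open>0 < \<delta>\<close> \<open>\<delta> \<le> 1 - S\<close> by (auto intro: less_imp_le)
  qed
  moreover have "vs \<noteq> []" "set vs = {..<n}" using walk unfolding closed_covering_walk_iff Vn_def by auto
  ultimately obtain P where P: "path_in n E P" "hd P = hd vs" "last P = last vs" "set vs \<subseteq> set P"
      "path_length y P \<le> (\<Sum>q\<leftarrow>arcs vs. capped_dist n E y (fst q) (snd q) + \<delta>)"
    using path_through_arcs[of vs n E y "\<lambda>q. capped_dist n E y (fst q) (snd q) + \<delta>"] by blast
  have "path_length y P \<le> S + real (length (arcs vs)) * \<delta>"
    using P(5) unfolding S_def sum_list_addf sum_list_triv by simp
  then have "path_length y P < 1" using \<open>real (length (arcs vs)) * \<delta> < 1 - S\<close> by simp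
  moreover have "hd P = last P" "set P = Vn n"
    using P \<open>set vs = {..<n}\<close> walk unfolding closed_covering_walk_iff path_in_def Vn_def by auto
  ultimately show False using closed_covering_path_length_ge_one[OF P(1)] by simp
qed

lemma edge_dist_walk_ge_one:
  assumes "w \<in> walks (Vn n) (En n)"
  shows "1 \<le> (\<Sum>e\<in>En n. real (w e) * edge_dist n E y e)"
proof -
  obtain vs where vs: "closed_covering_walk (Vn n) (En n) vs" "w = walk_vector vs"
    using assms unfolding walks_def by blast
  then have "(\<Sum>e\<in>En n. real (w e) * edge_dist n E y e)
      = (\<Sum>q\<leftarrow>arcs vs. capped_dist n E y (fst q) (snd q))"
    unfolding walk_vector_eq_edge_count closed_covering_walk_iff
    by (simp add: sum_edge_count finite_En edge_dist_doubleton)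
  then show ?thesis using sum_capped_dist_walk_ge_one[OF vs(1)] by simp
qed

end

section \<open>Weak duality\<close>

definition ordered_pairs :: "nat \<Rightarrow> (nat \<times> nat) set" where
  "ordered_pairs n = {(i, j). i < n \<and> j < n \<and> i \<noteq> j}"

definition ordered_triples :: "nat \<Rightarrow> ((nat \<times> nat) \<times> nat) set" where
  "ordered_triples n = {((i, j), k). i < n \<and> j < n \<and> k < n \<and> i \<noteq> j \<and> i \<noteq> k \<and> j \<noteq> k}"

lemma finite_ordered_pairs: "finite (ordered_pairs n)"
  by (rule finite_subset[of _ "{..<n} \<times> {..<n}"]) (auto simp: ordered_pairs_def)

lemma ordered_triples_eq_Sigma: "ordered_triples n = Sigma (ordered_pairs n) (\<lambda>p. Vn n - {fst p, snd p})"
  unfolding ordered_triples_def ordered_pairs_def Vn_def by auto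

lemma sum_ordered_pairs:
  "(\<Sum>p\<in>ordered_pairs n. g {fst p, snd p}) = 2 * (\<Sum>e\<in>En n. (g e :: real))"
proof -
  have image: "(\<lambda>p. {fst p, snd p}) ` ordered_pairs n = En n"
    unfolding ordered_pairs_def En_def by force
  have fibre: "{p\<in>ordered_pairs n. {fst p, snd p} = e} = {(i, j), (j, i)}"
    if "e = {i, j}" "i < n" "j < n" "i \<noteq> j" for e i j
    using that unfolding ordered_pairs_def by (auto simp: doubleton_eq_iff)
  have "(\<Sum>p\<in>ordered_pairs n. g {fst p, snd p})
      = (\<Sum>e\<in>En n. \<Sum>p\<in>{p\<in>ordered_pairs n. {fst p, snd p} = e}. g {fst p, snd p})"
    unfolding image[symmetric] by (rule sum.image_gen[OF finite_ordered_pairs])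
  also have "\<dots> = (\<Sum>e\<in>En n. 2 * g e)"
  proof (rule sum.cong[OF refl])
    fix e assume "e \<in> En n"
    then obtain i j where ij: "e = {i, j}" "i < n" "j < n" "i \<noteq> j" unfolding En_def by auto
    then show "(\<Sum>p\<in>{p\<in>ordered_pairs n. {fst p, snd p} = e}. g {fst p, snd p}) = 2 * g e"
      unfolding fibre[OF ij] by (simp add: insert_commute)
  qed
  finally show ?thesis by (simp add: sum_distrib_left)
qed

text \<open>The \<open>\<lambda>\<close>-terms of \<open>DOPT\<^sup>I\<close>, weighted by a semimetric \<open>D\<close>, regroup into
  \<open>\<Sum> \<lambda>\<^sub>i\<^sub>j\<^sub>k (D\<^sub>i\<^sub>k + D\<^sub>j\<^sub>k - D\<^sub>i\<^sub>j) \<ge> 0\<close>.\<close>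

lemma lambda_terms_metric_nonneg:
  fixes lam :: "nat set \<Rightarrow> nat \<Rightarrow> real" and D :: "nat set \<Rightarrow> real"
  assumes lam_nonneg: "\<forall>e\<in>En n. \<forall>k\<in>Vn n - e. 0 \<le> lam e k"
    and triangle: "\<And>i j k. i < n \<Longrightarrow> j < n \<Longrightarrow> k < n \<Longrightarrow> D {i, j} \<le> D {i, k} + D {k, j}"
  shows "0 \<le> (\<Sum>p\<in>ordered_pairs n. D {fst p, snd p} * (\<Sum>k\<in>Vn n - {fst p, snd p}.
            - lam {fst p, snd p} k + lam {fst p, k} (snd p) + lam {snd p, k} (fst p)))"
proof -
  let ?T = "ordered_triples n"
  define F where "F = (\<lambda>((i, j), k). D {i, j} * lam {i, j} k)"
  define G where "G = (\<lambda>((i, j), k). D {i, j} * lam {i, k} j)"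
  define H where "H = (\<lambda>((i, j), k). D {i, j} * lam {j, k} i)"
  define G' where "G' = (\<lambda>((i, j), k). D {i, k} * lam {i, j} k)"
  define H' where "H' = (\<lambda>((i, j), k). D {j, k} * lam {i, j} k)"
  define swap23 :: "(nat \<times> nat) \<times> nat \<Rightarrow> (nat \<times> nat) \<times> nat"
    where "swap23 = (\<lambda>((i, j), k). ((i, k), j))"
  define swap13 :: "(nat \<times> nat) \<times> nat \<Rightarrow> (nat \<times> nat) \<times> nat"
    where "swap13 = (\<lambda>((i, j), k). ((k, j), i))"
  have "(\<Sum>p\<in>ordered_pairs n. D {fst p, snd p} * (\<Sum>k\<in>Vn n - {fst p, snd p}.
            - lam {fst p, snd p} k + lam {fst p, k} (snd p) + lam {snd p, k} (fst p)))
      = (\<Sum>t\<in>?T. - F t + G t + H t)"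
    unfolding ordered_triples_eq_Sigma sum_distrib_left
    by (subst sum.Sigma) (auto simp: finite_ordered_pairs Vn_def F_def G_def H_def algebra_simps split_def)
  also have "\<dots> = (\<Sum>t\<in>?T. - F t + G' t + H' t)"
  proof -
    have "(\<Sum>t\<in>?T. G t) = (\<Sum>t\<in>?T. G' t)"
      by (rule sum.reindex_bij_witness[where i=swap23 and j=swap23])
         (auto simp: ordered_triples_def swap23_def G_def G'_def)
    moreover have "(\<Sum>t\<in>?T. H t) = (\<Sum>t\<in>?T. H' t)"
      by (rule sum.reindex_bij_witness[where i=swap13 and j=swap13])
         (auto simp: ordered_triples_def swap13_def H_def H'_def insert_commute)
    ultimately show ?thesis by (simp only: sum.distrib)
  qed
  also have "0 \<le> \<dots>"
  proof (rule sum_nonneg)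
    fix t assume "t \<in> ?T"
    then obtain i j k where t: "t = ((i, j), k)" "i < n" "j < n" "k < n" "i \<noteq> j" "i \<noteq> k" "j \<noteq> k"
      unfolding ordered_triples_def by auto
    then have "0 \<le> lam {i, j} k" using lam_nonneg unfolding En_def Vn_def by auto
    moreover have "D {i, j} \<le> D {i, k} + D {j, k}" using triangle[OF t(2-4)] by (simp add: insert_commute)
    ultimately have "D {i, j} * lam {i, j} k \<le> (D {i, k} + D {j, k}) * lam {i, j} k"
      by (simp add: mult_right_mono)
    then show "0 \<le> - F t + G' t + H' t"
      unfolding t F_def G'_def H'_def by (simp add: distrib_right)
  qed
  finally show ?thesis .
qed

lemma DOPT_I_feasible_metric_bound:
  fixes D :: "nat set \<Rightarrow> real"
  assumes feas: "(lam, mu) \<in> DOPT_I_feasible n x"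
    and D_nonneg: "\<And>e. 0 \<le> D e"
    and triangle: "\<And>i j k. i < n \<Longrightarrow> j < n \<Longrightarrow> k < n \<Longrightarrow> D {i, j} \<le> D {i, k} + D {k, j}"
  shows "(\<Sum>e\<in>En n. D e * (\<Sum>w\<in>walks (Vn n) (En n). real (w e) * mu w)) \<le> (\<Sum>e\<in>En n. D e * x e)"
proof -
  define L where "L e = (\<Sum>w\<in>walks (Vn n) (En n). real (w e) * mu w)" for e
  define c where "c p = (\<Sum>k\<in>Vn n - {fst p, snd p}.
      - lam {fst p, snd p} k + lam {fst p, k} (snd p) + lam {snd p, k} (fst p))" for p
  have "(\<Sum>k\<in>Vn n - {i, j}. - lam {i, j} k + lam {i, k} j + lam {j, k} i) + L {i, j} \<le> x {i, j}"
    if "i < n" "j < n" "i \<noteq> j" for i j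
    using feas that unfolding DOPT_I_feasible_def L_def by blast
  then have "L {fst p, snd p} \<le> x {fst p, snd p} - c p" if "p \<in> ordered_pairs n" for p
    using that unfolding ordered_pairs_def c_def by force
  then have "(\<Sum>p\<in>ordered_pairs n. D {fst p, snd p} * L {fst p, snd p})
      \<le> (\<Sum>p\<in>ordered_pairs n. D {fst p, snd p} * x {fst p, snd p} - D {fst p, snd p} * c p)"
    using D_nonneg by (intro sum_mono) (simp flip: right_diff_distrib add: mult_left_mono)
  also have "\<dots> \<le> (\<Sum>p\<in>ordered_pairs n. D {fst p, snd p} * x {fst p, snd p})"
    using lambda_terms_metric_nonneg[of n lam D] feas triangle
    unfolding sum_subtractf c_def DOPT_I_feasible_def by auto
  finally show ?thesis
    using sum_ordered_pairs[of "\<lambda>e. D e * L e" n] sum_ordered_pairs[of "\<lambda>e. D e * x e" n]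
    unfolding L_def by simp
qed

lemma DOPT_I_objective_le_dual:
  assumes E_sub: "E \<subseteq> En n" and x_nonneg: "\<forall>e\<in>En n. 0 \<le> x e" and x_supp: "\<forall>e\<in>En n - E. x e = 0"
    and y_nonneg: "\<forall>e\<in>E. 0 \<le> y e" and walks_long: "\<forall>w\<in>walks (Vn n) E. 1 \<le> (\<Sum>e\<in>E. real (w e) * y e)"
    and feas: "(lam, mu) \<in> DOPT_I_feasible n x"
  shows "(\<Sum>w\<in>walks (Vn n) (En n). mu w) \<le> (\<Sum>e\<in>E. y e * x e)"
proof -
  define WK where "WK = walks (Vn n) (En n)"
  define D where "D = edge_dist n E y"
  have D_nonneg: "0 \<le> D e" for e
    unfolding D_def edge_dist_def using capped_dist_nonneg[OF y_nonneg] .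
  have triangle: "D {i, j} \<le> D {i, k} + D {k, j}" for i j k
    unfolding D_def edge_dist_doubleton using capped_dist_triangle[OF y_nonneg] .
  have walk_D: "1 \<le> (\<Sum>e\<in>En n. real (w e) * D e)" if "w \<in> WK" for w
    using edge_dist_walk_ge_one[OF E_sub y_nonneg walks_long] that unfolding WK_def D_def by blast
  have mu_nonneg: "\<forall>w\<in>WK. 0 \<le> mu w" using feas unfolding DOPT_I_feasible_def WK_def by auto
  have "(\<Sum>w\<in>WK. mu w) \<le> (\<Sum>w\<in>WK. mu w * (\<Sum>e\<in>En n. real (w e) * D e))"
  proof (rule sum_mono)
    fix w assume "w \<in> WK"
    then show "mu w \<le> mu w * (\<Sum>e\<in>En n. real (w e) * D e)"
      using mult_left_mono[OF walk_D, of w "mu w"] mu_nonneg by simp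
  qed
  also have "\<dots> = (\<Sum>e\<in>En n. D e * (\<Sum>w\<in>WK. real (w e) * mu w))"
    by (simp add: sum_distrib_left sum.swap[of _ WK] mult_ac)
  also have "\<dots> \<le> (\<Sum>e\<in>En n. D e * x e)"
    unfolding WK_def using DOPT_I_feasible_metric_bound[where D=D, OF feas D_nonneg triangle] .
  also have "\<dots> = (\<Sum>e\<in>E. D e * x e)"
    using x_supp E_sub by (intro sum.mono_neutral_right) (auto simp: finite_En)
  also have "\<dots> \<le> (\<Sum>e\<in>E. y e * x e)"
  proof (rule sum_mono)
    fix e assume "e \<in> E"
    then obtain u v where "e = {u, v}" "u < n" "v < n" using E_sub unfolding En_def by blast
    then have "D e \<le> y e"
      using capped_dist_le_edge[OF y_nonneg] \<open>e \<in> E\<close> by (simp add: D_def edge_dist_doubleton)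
    then show "D e * x e \<le> y e * x e" using x_nonneg E_sub \<open>e \<in> E\<close> by (auto intro: mult_right_mono)
  qed
  finally show ?thesis unfolding WK_def .
qed

lemma DOPT_II_le_DOPT_I:
  assumes x_nonneg: "\<forall>e\<in>En n. 0 \<le> x e"
  shows "DOPT_II n x \<le> DOPT_I n x"
  unfolding DOPT_II_def DOPT_I_def
proof (rule Sup_mono, clarify)
  fix mu assume mu: "mu \<in> DOPT_II_feasible n x"
  define E where "E = support_edges n x"
  define W where "W = walks (Vn n) E"
  define mu' where "mu' w = (if w \<in> W then mu w else 0)" for w
  have E_sub: "E \<subseteq> En n" unfolding E_def support_edges_def by auto
  have extend: "(\<Sum>w\<in>walks (Vn n) (En n). f w * mu' w) = (\<Sum>w\<in>W. f w * mu w)" for f :: "_ \<Rightarrow> real"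
    unfolding mu'_def W_def using walks_mono[OF E_sub] finite_walks[of "En n" n]
    by (simp add: if_distrib[of "\<lambda>c. _ * c"] sum.If_cases Int_absorb1 cong: if_cong)
  have "(\<Sum>w\<in>W. real (w {i, j}) * mu w) \<le> x {i, j}" if "i < n" "j < n" "i \<noteq> j" for i j
  proof (cases "{i, j} \<in> E")
    case True
    then show ?thesis using mu unfolding DOPT_II_feasible_def W_def E_def by blast
  next
    case False
    then have "(\<Sum>w\<in>W. real (w {i, j}) * mu w) = 0"
      unfolding W_def by (simp add: walks_vanish_off_edges)
    moreover have "{i, j} \<in> En n" using that unfolding En_def by blast
    ultimately show ?thesis using x_nonneg by simp
  qed
  moreover have "\<forall>w\<in>W. 0 \<le> mu w" using mu unfolding DOPT_II_feasible_def W_def E_def by blast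
  ultimately have "(\<lambda>_ _. 0, mu') \<in> DOPT_I_feasible n x"
    unfolding DOPT_I_feasible_def using extend by (auto simp: mu'_def)
  moreover have "(\<Sum>w\<in>walks (Vn n) (support_edges n x). mu w) = (\<Sum>w\<in>walks (Vn n) (En n). mu' w)"
    using extend[of "\<lambda>_. 1"] unfolding W_def E_def by simp
  ultimately show "\<exists>a\<in>(\<lambda>(lam, mu). ereal (\<Sum>w\<in>walks (Vn n) (En n). mu w)) ` DOPT_I_feasible n x.
      ereal (\<Sum>w\<in>walks (Vn n) (support_edges n x). mu w) \<le> a"
    by force
qed

lemma DOPT_I_le_DOPT_II:
  assumes x_nonneg: "\<forall>e\<in>En n. 0 \<le> x e"
  shows "DOPT_I n x \<le> DOPT_II n x"
  unfolding DOPT_I_def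
proof (rule Sup_least, clarify)
  fix lam mu assume feas: "(lam, mu) \<in> DOPT_I_feasible n x"
  define s where "s = (\<Sum>w\<in>walks (Vn n) (En n). mu w)"
  define E where "E = support_edges n x"
  define W where "W = walks (Vn n) E"
  have E_sub: "E \<subseteq> En n" unfolding E_def support_edges_def by auto
  have x_supp: "\<forall>e\<in>En n - E. x e = 0" using x_nonneg unfolding E_def support_edges_def by force
  show "ereal s \<le> DOPT_II n x"
  proof (rule ccontr)
    assume "\<not> ereal s \<le> DOPT_II n x"
    then have II_less: "DOPT_II n x < ereal s" by simp
    have "(\<Sum>w\<in>W. z w) < s"
      if "\<forall>e\<in>E. (\<Sum>w\<in>W. real (w e) * z w) \<le> x e" "\<forall>w\<in>W. 0 \<le> z w" for z
    proof -
      have "z \<in> DOPT_II_feasible n x" using that unfolding DOPT_II_feasible_def W_def E_def by blast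
      then have "ereal (\<Sum>w\<in>W. z w) \<le> DOPT_II n x"
        unfolding DOPT_II_def W_def E_def by (rule SUP_upper)
      then have "ereal (\<Sum>w\<in>W. z w) < ereal s" using II_less by (rule order.strict_trans1)
      then show ?thesis by simp
    qed
    moreover have "finite E" "finite W" "\<forall>e\<in>E. 0 \<le> x e"
      using finite_subset[OF E_sub finite_En] finite_walks[OF E_sub] x_nonneg E_sub
      unfolding W_def by auto
    ultimately obtain y where y: "\<forall>e\<in>E. 0 \<le> y e" "\<forall>w\<in>W. 1 \<le> (\<Sum>e\<in>E. real (w e) * y e)"
        "(\<Sum>e\<in>E. y e * x e) < s"
      using packing_dual_certificate[of E W x "\<lambda>e w. real (w e)" s] by blast
    have "s \<le> (\<Sum>e\<in>E. y e * x e)"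
      using DOPT_I_objective_le_dual[OF E_sub x_nonneg x_supp y(1) _ feas] y(2)
      unfolding W_def s_def by blast
    then show False using y(3) by simp
  qed
qed

theorem mainTheorem8:
  fixes n :: nat and x :: "nat set \<Rightarrow> real"
  assumes "is_vertex x (P_SEP n)"
  shows "DOPT_I n x = DOPT_II n x"
proof -
  have "\<forall>e\<in>En n. 0 \<le> x e" using assms unfolding is_vertex_def P_SEP_def by blast
  then show ?thesis using DOPT_I_le_DOPT_II DOPT_II_le_DOPT_I by (blast intro: antisym)
qed

end
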